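(* A connected split graph is connected-domishold if and only if it is total domishold.
   Context: A graph is split if its vertex set can be partitioned into a clique and an independent set. A connected dominating set of a connected graph $G$ is a set $S\subseteq V(G)$ such that every vertex not in $S$ has a neighbor in $S$ and $G[S]$ is connected. A graph $G=(V,E)$ is connected-domishold if there exist $w:V\to\mathbb{R}_{\ge0}$ and $t\in\mathbb{R}_{\ge0}$ such that for all $S\subseteq V$, $\sum_{x\in S}w(x)\ge t$ iff $S$ is a connected dominating set. A total dominating set of $G$ is a set $S\subseteq V(G)$ such that every vertex of $G$ has a neighbor in $S$. $G$ is total domishold if there exist $w:V\to\mathbb{R}_{\ge0}$ and $t\in\mathbb{R}_{\ge0}$ such that for all $S\subseteq V$, $\sum_{x\in S}w(x)\ge t$ iff $S$ is a total dominating set of $G$. *)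

theory Defs
  imports Complex_Main
begin

definition graph :: "'a set \<Rightarrow> ('a \<Rightarrow> 'a \<Rightarrow> bool) \<Rightarrow> bool" where
  "graph V E \<longleftrightarrow> finite V \<and> (\<forall>x y. E x y \<longrightarrow> x \<in> V \<and> y \<in> V)
     \<and> (\<forall>x y. E x y \<longrightarrow> E y x) \<and> (\<forall>x. \<not> E x x)"

definition induced_connected :: "('a \<Rightarrow> 'a \<Rightarrow> bool) \<Rightarrow> 'a set \<Rightarrow> bool" where
  "induced_connected E S \<longleftrightarrow>
     (\<forall>x\<in>S. \<forall>y\<in>S. (\<lambda>a b. a \<in> S \<and> b \<in> S \<and> E a b)\<^sup>*\<^sup>* x y)"

definition connected_graph :: "'a set \<Rightarrow> ('a \<Rightarrow> 'a \<Rightarrow> bool) \<Rightarrow> bool" where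
  "connected_graph V E \<longleftrightarrow> V \<noteq> {} \<and> induced_connected E V"

definition split_graph :: "'a set \<Rightarrow> ('a \<Rightarrow> 'a \<Rightarrow> bool) \<Rightarrow> bool" where
  "split_graph V E \<longleftrightarrow> (\<exists>K I. K \<union> I = V \<and> K \<inter> I = {}
     \<and> (\<forall>x\<in>K. \<forall>y\<in>K. x \<noteq> y \<longrightarrow> E x y)
     \<and> (\<forall>x\<in>I. \<forall>y\<in>I. \<not> E x y))"

definition connected_dominating_set :: "'a set \<Rightarrow> ('a \<Rightarrow> 'a \<Rightarrow> bool) \<Rightarrow> 'a set \<Rightarrow> bool" where
  "connected_dominating_set V E S \<longleftrightarrow> S \<subseteq> V
     \<and> (\<forall>v\<in>V - S. \<exists>u\<in>S. E v u) \<and> induced_connected E S"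

definition total_dominating_set :: "'a set \<Rightarrow> ('a \<Rightarrow> 'a \<Rightarrow> bool) \<Rightarrow> 'a set \<Rightarrow> bool" where
  "total_dominating_set V E S \<longleftrightarrow> S \<subseteq> V \<and> (\<forall>v\<in>V. \<exists>u\<in>S. E v u)"

definition connected_domishold :: "'a set \<Rightarrow> ('a \<Rightarrow> 'a \<Rightarrow> bool) \<Rightarrow> bool" where
  "connected_domishold V E \<longleftrightarrow> (\<exists>(w :: 'a \<Rightarrow> real) (t :: real).
     (\<forall>x\<in>V. w x \<ge> 0) \<and> t \<ge> 0 \<and>
     (\<forall>S. S \<subseteq> V \<longrightarrow> ((\<Sum>x\<in>S. w x) \<ge> t \<longleftrightarrow> connected_dominating_set V E S)))"

definition total_domishold :: "'a set \<Rightarrow> ('a \<Rightarrow> 'a \<Rightarrow> bool) \<Rightarrow> bool" where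
  "total_domishold V E \<longleftrightarrow> (\<exists>(w :: 'a \<Rightarrow> real) (t :: real).
     (\<forall>x\<in>V. w x \<ge> 0) \<and> t \<ge> 0 \<and>
     (\<forall>S. S \<subseteq> V \<longrightarrow> ((\<Sum>x\<in>S. w x) \<ge> t \<longleftrightarrow> total_dominating_set V E S)))"

end

theory Submission
  imports Defs
begin

text \<open>Let U be the set of universal vertices. On sets avoiding U, connected and total
  domination coincide in a split graph: every vertex of a total dominating set lies in or next to
  the part of the set inside the clique, and a connected dominating set that fails to be total is a single universal
  vertex. A set containing some u \<in> U is always connected dominating, and it is total
  dominating unless it is {u}. So the two families differ only at U, and threshold weights
  transfer. Given weights (w, t) for total domination, give each universal vertex weight t.
  Given weights (w, t) for connected domination, finiteness yields a gap \<delta> > 0 below t for all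
  non-dominating sets; add a small e with e \<cdot> |V| < \<delta> to every vertex outside U and give each
  universal vertex weight t - e, so that {u} falls just short of t while every larger set
  containing u reaches it.\<close>

definition threshold_family :: "'a set \<Rightarrow> ('a set \<Rightarrow> bool) \<Rightarrow> bool" where
  "threshold_family V P \<longleftrightarrow> (\<exists>(w :: 'a \<Rightarrow> real) (t :: real).
     (\<forall>x\<in>V. w x \<ge> 0) \<and> t \<ge> 0 \<and>
     (\<forall>S. S \<subseteq> V \<longrightarrow> ((\<Sum>x\<in>S. w x) \<ge> t \<longleftrightarrow> P S)))"

lemma threshold_margin:
  fixes w :: "'a \<Rightarrow> real"
  assumes "finite V" and wt: "\<forall>S. S \<subseteq> V \<longrightarrow> ((\<Sum>x\<in>S. w x) \<ge> t \<longleftrightarrow> P S)"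
  obtains \<delta> where "\<delta> > 0" and "\<And>S. S \<subseteq> V \<Longrightarrow> \<not> P S \<Longrightarrow> (\<Sum>x\<in>S. w x) + \<delta> \<le> t"
proof -
  define D where "D = (\<lambda>S. t - (\<Sum>x\<in>S. w x)) ` {S. S \<subseteq> V \<and> \<not> P S}"
  have "finite D"
    unfolding D_def using \<open>finite V\<close> by (intro finite_imageI) (auto intro: rev_finite_subset)
  moreover have "\<forall>d\<in>D. d > 0"
    unfolding D_def using wt by auto
  ultimately have "Min (insert 1 D) > 0"
    by simp
  moreover have "(\<Sum>x\<in>S. w x) + Min (insert 1 D) \<le> t" if "S \<subseteq> V" "\<not> P S" for S
  proof -
    have "t - (\<Sum>x\<in>S. w x) \<in> D"
      unfolding D_def using that by blast
    then have "Min (insert 1 D) \<le> t - (\<Sum>x\<in>S. w x)"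
      using \<open>finite D\<close> by (intro Min_le) auto
    then show ?thesis
      by simp
  qed
  ultimately show ?thesis
    using that by blast
qed

lemma threshold_family_if_forced_on:
  assumes "threshold_family V Q" and "finite V"
    and agree: "\<And>S. S \<subseteq> V \<Longrightarrow> S \<inter> U = {} \<Longrightarrow> P S \<longleftrightarrow> Q S"
    and forced: "\<And>S u. S \<subseteq> V \<Longrightarrow> u \<in> S \<Longrightarrow> u \<in> U \<Longrightarrow> P S"
  shows "threshold_family V P"
proof -
  obtain w :: "'a \<Rightarrow> real" and t where w0: "\<forall>x\<in>V. w x \<ge> 0" and "t \<ge> 0"
    and wt: "\<forall>S. S \<subseteq> V \<longrightarrow> ((\<Sum>x\<in>S. w x) \<ge> t \<longleftrightarrow> Q S)"
    using assms(1) unfolding threshold_family_def by blast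
  define w' where "w' x = (if x \<in> U then w x + t else w x)" for x
  have w'0: "\<forall>x\<in>V. w' x \<ge> 0"
    unfolding w'_def using w0 \<open>t \<ge> 0\<close> by auto
  have "(\<Sum>x\<in>S. w' x) \<ge> t \<longleftrightarrow> P S" if "S \<subseteq> V" for S
  proof (cases "S \<inter> U = {}")
    case True
    then have "(\<Sum>x\<in>S. w' x) = (\<Sum>x\<in>S. w x)"
      unfolding w'_def by (intro sum.cong) auto
    then show ?thesis
      using wt agree[OF that True] that by simp
  next
    case False
    then obtain u where "u \<in> S" "u \<in> U" by auto
    have "finite S"
      using that \<open>finite V\<close> finite_subset by blast
    have "t \<le> w' u"
      unfolding w'_def using \<open>u \<in> U\<close> \<open>u \<in> S\<close> that w0 by auto
    also have "\<dots> \<le> (\<Sum>x\<in>S. w' x)"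
      using \<open>finite S\<close> \<open>u \<in> S\<close> that w'0 by (intro member_le_sum) auto
    finally show ?thesis
      using forced[OF that \<open>u \<in> S\<close> \<open>u \<in> U\<close>] by simp
  qed
  then show ?thesis
    unfolding threshold_family_def using w'0 \<open>t \<ge> 0\<close> by blast
qed

lemma threshold_family_if_singleton_exception_on:
  assumes "threshold_family V P" and "finite V" and "\<not> P {}"
    and agree: "\<And>S. S \<subseteq> V \<Longrightarrow> S \<inter> U = {} \<Longrightarrow> Q S \<longleftrightarrow> P S"
    and except: "\<And>S u. S \<subseteq> V \<Longrightarrow> u \<in> S \<Longrightarrow> u \<in> U \<Longrightarrow> Q S \<longleftrightarrow> S \<noteq> {u}"
  shows "threshold_family V Q"
proof -
  obtain w :: "'a \<Rightarrow> real" and t where w0: "\<forall>x\<in>V. w x \<ge> 0" and "t \<ge> 0"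
    and wt: "\<forall>S. S \<subseteq> V \<longrightarrow> ((\<Sum>x\<in>S. w x) \<ge> t \<longleftrightarrow> P S)"
    using assms(1) unfolding threshold_family_def by blast
  obtain \<delta> where "\<delta> > 0" and margin: "\<And>S. S \<subseteq> V \<Longrightarrow> \<not> P S \<Longrightarrow> (\<Sum>x\<in>S. w x) + \<delta> \<le> t"
    using threshold_margin[OF \<open>finite V\<close> wt] by blast
  have "\<delta> \<le> t"
    using margin[of "{}"] \<open>\<not> P {}\<close> by simp
  define e where "e = \<delta> / (real (card V) + 2)"
  have "e > 0"
    unfolding e_def using \<open>\<delta> > 0\<close> by simp
  have "2 * e \<le> t"
  proof -
    have "2 * e \<le> e * (real (card V) + 2)"
      using \<open>e > 0\<close> by simp
    then show ?thesis
      unfolding e_def using \<open>\<delta> \<le> t\<close> by simp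
  qed
  have small: "e * real (card S) < \<delta>" if "S \<subseteq> V" for S
  proof -
    have "e * real (card S) \<le> e * real (card V)"
      using \<open>e > 0\<close> card_mono[OF \<open>finite V\<close> that] by simp
    also have "\<dots> < e * (real (card V) + 2)"
      using \<open>e > 0\<close> by simp
    finally show ?thesis
      unfolding e_def by simp
  qed
  define w' where "w' x = (if x \<in> U then t - e else w x + e)" for x
  have w'e: "w' x \<ge> e" if "x \<in> V" for x
    unfolding w'_def using w0 that \<open>2 * e \<le> t\<close> by auto
  have "(\<Sum>x\<in>S. w' x) \<ge> t \<longleftrightarrow> Q S" if "S \<subseteq> V" for S
  proof (cases "S \<inter> U = {}")
    case True
    have "(\<Sum>x\<in>S. w' x) = (\<Sum>x\<in>S. w x + e)"
      using True unfolding w'_def by (intro sum.cong) auto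
    then have sum_w': "(\<Sum>x\<in>S. w' x) = (\<Sum>x\<in>S. w x) + e * real (card S)"
      by (simp add: sum.distrib)
    show ?thesis
    proof (cases "P S")
      case True
      then show ?thesis
        using wt that sum_w' \<open>e > 0\<close> agree[OF that \<open>S \<inter> U = {}\<close>]
        by (simp add: add_increasing2)
    next
      case False
      then show ?thesis
        using margin[OF that] small[OF that] sum_w' agree[OF that \<open>S \<inter> U = {}\<close>] by simp
    qed
  next
    case False
    then obtain u where "u \<in> S" "u \<in> U" by auto
    have "finite S"
      using that \<open>finite V\<close> finite_subset by blast
    have split_u: "(\<Sum>x\<in>S. w' x) = (t - e) + (\<Sum>x\<in>S - {u}. w' x)"
      using \<open>finite S\<close> \<open>u \<in> S\<close> \<open>u \<in> U\<close> by (simp add: sum.remove w'_def)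
    show ?thesis
    proof (cases "S = {u}")
      case True
      then show ?thesis
        using split_u \<open>e > 0\<close> except[OF that \<open>u \<in> S\<close> \<open>u \<in> U\<close>] by simp
    next
      case False
      then obtain y where "y \<in> S - {u}"
        using \<open>u \<in> S\<close> by blast
      have "e \<le> w' y"
        using w'e \<open>y \<in> S - {u}\<close> that by blast
      also have "\<dots> \<le> (\<Sum>x\<in>S - {u}. w' x)"
        using \<open>finite S\<close> \<open>y \<in> S - {u}\<close> w'e \<open>e > 0\<close> that
        by (intro member_le_sum) force+
      finally show ?thesis
        using split_u False except[OF that \<open>u \<in> S\<close> \<open>u \<in> U\<close>] by simp
    qed
  qed
  moreover have "\<forall>x\<in>V. w' x \<ge> 0"
    using w'e \<open>e > 0\<close> by force
  ultimately show ?thesis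
    unfolding threshold_family_def using \<open>t \<ge> 0\<close> by blast
qed

definition universal_vertex :: "'a set \<Rightarrow> ('a \<Rightarrow> 'a \<Rightarrow> bool) \<Rightarrow> 'a \<Rightarrow> bool" where
  "universal_vertex V E u \<longleftrightarrow> u \<in> V \<and> (\<forall>x\<in>V - {u}. E x u)"

lemma induced_connected_via_clique:
  assumes sym: "\<And>x y. E x y \<Longrightarrow> E y x"
    and "C \<subseteq> S" and clique: "\<And>c c'. c \<in> C \<Longrightarrow> c' \<in> C \<Longrightarrow> c \<noteq> c' \<Longrightarrow> E c c'"
    and reach: "\<And>x. x \<in> S \<Longrightarrow> \<exists>c\<in>C. x = c \<or> E x c"
  shows "induced_connected E S"
proof -
  let ?R = "\<lambda>a b. a \<in> S \<and> b \<in> S \<and> E a b"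
  have to_clique: "\<exists>c\<in>C. ?R\<^sup>*\<^sup>* x c \<and> ?R\<^sup>*\<^sup>* c x" if "x \<in> S" for x
  proof -
    obtain c where "c \<in> C" and "x = c \<or> E x c"
      using reach \<open>x \<in> S\<close> by blast
    moreover have "?R\<^sup>*\<^sup>* x c \<and> ?R\<^sup>*\<^sup>* c x" if "E x c"
      using that sym \<open>x \<in> S\<close> \<open>c \<in> C\<close> \<open>C \<subseteq> S\<close> by (auto intro: r_into_rtranclp)
    ultimately show ?thesis
      by blast
  qed
  have within_clique: "?R\<^sup>*\<^sup>* c c'" if "c \<in> C" "c' \<in> C" for c c'
    using that \<open>C \<subseteq> S\<close> clique by (cases "c = c'") (auto intro: r_into_rtranclp)
  show ?thesis
    unfolding induced_connected_def
  proof (intro ballI)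
    fix x y
    assume "x \<in> S" "y \<in> S"
    then obtain c c' where "c \<in> C" "?R\<^sup>*\<^sup>* x c" "c' \<in> C" "?R\<^sup>*\<^sup>* c' y"
      using to_clique by meson
    then show "?R\<^sup>*\<^sup>* x y"
      using within_clique by (meson rtranclp_trans)
  qed
qed

lemma total_dominating_set_imp_connected_dominating_set:
  assumes "graph V E" and "split_graph V E" and T: "total_dominating_set V E S"
  shows "connected_dominating_set V E S"
proof -
  obtain K I where KI: "K \<union> I = V" "K \<inter> I = {}"
    and K: "\<forall>x\<in>K. \<forall>y\<in>K. x \<noteq> y \<longrightarrow> E x y" and I: "\<forall>x\<in>I. \<forall>y\<in>I. \<not> E x y"
    using \<open>split_graph V E\<close> unfolding split_graph_def by blast
  have "S \<subseteq> V" and dom: "\<forall>v\<in>V. \<exists>u\<in>S. E v u"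
    using T unfolding total_dominating_set_def by auto
  have edge_V: "\<And>x y. E x y \<Longrightarrow> y \<in> V" and sym: "\<And>x y. E x y \<Longrightarrow> E y x"
    using \<open>graph V E\<close> unfolding graph_def by auto
  have "\<exists>c\<in>S \<inter> K. x = c \<or> E x c" if "x \<in> S" for x
  proof (cases "x \<in> K")
    case True
    then show ?thesis
      using \<open>x \<in> S\<close> by blast
  next
    case False
    obtain z where "z \<in> S" "E x z"
      using dom \<open>x \<in> S\<close> \<open>S \<subseteq> V\<close> by blast
    have "x \<in> I"
      using False \<open>x \<in> S\<close> \<open>S \<subseteq> V\<close> KI by blast
    moreover have "z \<in> V"
      using edge_V \<open>E x z\<close> .
    ultimately have "z \<in> K"
      using I KI \<open>E x z\<close> by blast
    then show ?thesis
      using \<open>z \<in> S\<close> \<open>E x z\<close> by blast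
  qed
  moreover have "E c c'" if "c \<in> S \<inter> K" "c' \<in> S \<inter> K" "c \<noteq> c'" for c c'
    using K that by blast
  ultimately have "induced_connected E S"
    using induced_connected_via_clique[where E = E and C = "S \<inter> K"] sym by blast
  then show ?thesis
    unfolding connected_dominating_set_def using \<open>S \<subseteq> V\<close> dom by blast
qed

lemma connected_dominating_set_imp_total_dominating_set:
  assumes C: "connected_dominating_set V E S"
    and no_universal: "\<And>u. u \<in> S \<Longrightarrow> \<not> universal_vertex V E u"
  shows "total_dominating_set V E S"
proof (rule ccontr)
  assume "\<not> total_dominating_set V E S"
  have "S \<subseteq> V" and dom: "\<forall>v\<in>V - S. \<exists>u\<in>S. E v u" and "induced_connected E S"
    using C unfolding connected_dominating_set_def by auto
  then obtain v where "v \<in> V" and isolated: "\<forall>u\<in>S. \<not> E v u"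
    using \<open>\<not> total_dominating_set V E S\<close> unfolding total_dominating_set_def by auto
  then have "v \<in> S"
    using dom by blast
  have "S = {v}"
  proof (rule ccontr)
    assume "S \<noteq> {v}"
    then obtain y where "y \<in> S" "y \<noteq> v"
      using \<open>v \<in> S\<close> by blast
    then have "(\<lambda>a b. a \<in> S \<and> b \<in> S \<and> E a b)\<^sup>*\<^sup>* v y"
      using \<open>induced_connected E S\<close> \<open>v \<in> S\<close> unfolding induced_connected_def by blast
    then show False
      using \<open>y \<noteq> v\<close> isolated by (cases rule: converse_rtranclpE) auto
  qed
  then have "universal_vertex V E v"
    unfolding universal_vertex_def using dom \<open>v \<in> V\<close> by auto
  then show False
    using no_universal \<open>v \<in> S\<close> by blast
qed

lemma connected_dominating_set_if_universal:
  assumes "graph V E" and "universal_vertex V E u" and "u \<in> S" and "S \<subseteq> V"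
  shows "connected_dominating_set V E S"
proof -
  have sym: "\<And>x y. E x y \<Longrightarrow> E y x"
    using \<open>graph V E\<close> unfolding graph_def by auto
  have "\<forall>x\<in>V - {u}. E x u"
    using \<open>universal_vertex V E u\<close> unfolding universal_vertex_def by blast
  then have "induced_connected E S"
    using \<open>u \<in> S\<close> \<open>S \<subseteq> V\<close> by (intro induced_connected_via_clique[OF sym, where C = "{u}"]) auto
  moreover have "\<forall>v\<in>V - S. \<exists>x\<in>S. E v x"
    using \<open>u \<in> S\<close> \<open>\<forall>x\<in>V - {u}. E x u\<close> by auto
  ultimately show ?thesis
    unfolding connected_dominating_set_def using \<open>S \<subseteq> V\<close> by simp
qed

lemma total_dominating_set_universal_iff:
  assumes "graph V E" and "universal_vertex V E u" and "u \<in> S" and "S \<subseteq> V"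
  shows "total_dominating_set V E S \<longleftrightarrow> S \<noteq> {u}"
proof
  assume "total_dominating_set V E S"
  moreover have "\<not> E u u"
    using \<open>graph V E\<close> unfolding graph_def by blast
  ultimately show "S \<noteq> {u}"
    using \<open>universal_vertex V E u\<close> unfolding total_dominating_set_def universal_vertex_def by auto
next
  assume "S \<noteq> {u}"
  then obtain y where "y \<in> S" "y \<noteq> u"
    using \<open>u \<in> S\<close> by blast
  have sym: "\<And>x y. E x y \<Longrightarrow> E y x"
    using \<open>graph V E\<close> unfolding graph_def by auto
  have "\<forall>x\<in>V - {u}. E x u"
    using \<open>universal_vertex V E u\<close> unfolding universal_vertex_def by blast
  then have "E u y"
    using sym \<open>y \<in> S\<close> \<open>y \<noteq> u\<close> \<open>S \<subseteq> V\<close> by blast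
  then show "total_dominating_set V E S"
    unfolding total_dominating_set_def
    using \<open>S \<subseteq> V\<close> \<open>\<forall>x\<in>V - {u}. E x u\<close> \<open>u \<in> S\<close> \<open>y \<in> S\<close> by (metis DiffI singletonD)
qed

lemma connected_dominating_set_iff_total_if_no_universal:
  assumes "graph V E" and "split_graph V E" and "\<And>u. u \<in> S \<Longrightarrow> \<not> universal_vertex V E u"
  shows "connected_dominating_set V E S \<longleftrightarrow> total_dominating_set V E S"
  using assms total_dominating_set_imp_connected_dominating_set
    connected_dominating_set_imp_total_dominating_set by blast

theorem mainTheorem5:
  fixes V :: "'a set" and E :: "'a \<Rightarrow> 'a \<Rightarrow> bool"
  assumes "graph V E" and "connected_graph V E" and "split_graph V E"
  shows "connected_domishold V E \<longleftrightarrow> total_domishold V E"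
proof -
  define U where "U = {u. universal_vertex V E u}"
  have agree: "connected_dominating_set V E S \<longleftrightarrow> total_dominating_set V E S"
    if "S \<inter> U = {}" for S
    using that connected_dominating_set_iff_total_if_no_universal[OF assms(1,3)]
    unfolding U_def by blast
  have "finite V"
    using \<open>graph V E\<close> unfolding graph_def by blast
  have "\<not> connected_dominating_set V E {}"
    using \<open>connected_graph V E\<close> unfolding connected_graph_def connected_dominating_set_def by auto
  have "threshold_family V (connected_dominating_set V E)
      \<longleftrightarrow> threshold_family V (total_dominating_set V E)"
  proof
    assume "threshold_family V (connected_dominating_set V E)"
    from this \<open>finite V\<close> \<open>\<not> connected_dominating_set V E {}\<close>
    show "threshold_family V (total_dominating_set V E)"
      by (rule threshold_family_if_singleton_exception_on[where U = U])
        (use agree total_dominating_set_universal_iff[OF \<open>graph V E\<close>] in \<open>auto simp: U_def\<close>)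
  next
    assume "threshold_family V (total_dominating_set V E)"
    from this \<open>finite V\<close> show "threshold_family V (connected_dominating_set V E)"
      by (rule threshold_family_if_forced_on[where U = U])
        (use agree connected_dominating_set_if_universal[OF \<open>graph V E\<close>] in \<open>auto simp: U_def\<close>)
  qed
  then show ?thesis
    unfolding connected_domishold_def total_domishold_def threshold_family_def .
qed

end
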